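(* For all $n,k\geq 1$, the space $\overline{\mathrm{SP}}^n(\bigvee^kS^1)$ is homeomorphic to the $n$-skeleton of the torus $(S^1)^k$, where $(S^1)^k$ carries the product CW structure in which each circle factor has one $0$-cell (the identity) and one $1$-cell.
   Context: Each circle of the wedge $\bigvee^kS^1$ is identified with the circle group $S^1$, the wedge point being the identity $1$ of each. $\mathrm{SP}^nY=Y^n/\Sigma_n$ is the $n$-th symmetric product, with points $\langle x_1,\ldots,x_n\rangle$. $\overline{\mathrm{SP}}^n(\bigvee^kS^1)$ is the quotient of $\mathrm{SP}^n(\bigvee^kS^1)$ by the equivalence relation generated by $\langle x,y,z_1,\ldots,z_{n-2}\rangle\sim\langle *,xy,z_1,\ldots,z_{n-2}\rangle$ whenever $x,y$ lie in the same circle, $xy$ being their product in that circle group and $*$ the wedge point. *)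

theory Defs
  imports "HOL-Analysis.Analysis" "HOL-Combinatorics.Permutations"
begin

text \<open>Quotient of a topological space X by a relation r (intended to be an equivalence
  relation on topspace X).\<close>

definition qcls :: "'a topology \<Rightarrow> ('a \<Rightarrow> 'a \<Rightarrow> bool) \<Rightarrow> 'a \<Rightarrow> 'a set" where
  "qcls X r x = {y \<in> topspace X. r x y}"

lemma istopology_quot:
  "istopology (\<lambda>U. U \<subseteq> qcls X r ` topspace X \<and> openin X {x \<in> topspace X. qcls X r x \<in> U})"
proof -
  have inter: "{x \<in> topspace X. qcls X r x \<in> S \<inter> T}
      = {x \<in> topspace X. qcls X r x \<in> S} \<inter> {x \<in> topspace X. qcls X r x \<in> T}" for S T
    by auto
  have un: "{x \<in> topspace X. qcls X r x \<in> \<Union>K} = (\<Union>U\<in>K. {x \<in> topspace X. qcls X r x \<in> U})" for K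
    by auto
  show ?thesis
    unfolding istopology_def
    apply (intro conjI allI impI)
       apply blast
      apply (simp only: inter) apply (blast intro: openin_Int)
     apply blast
    apply (simp only: un) apply (blast intro: openin_Union)
    done
qed

definition quot_top :: "'a topology \<Rightarrow> ('a \<Rightarrow> 'a \<Rightarrow> bool) \<Rightarrow> 'a set topology" where
  "quot_top X r = topology (\<lambda>U. U \<subseteq> qcls X r ` topspace X \<and>
                                 openin X {x \<in> topspace X. qcls X r x \<in> U})"

definition circle :: "complex topology" where
  "circle = subtopology euclidean (sphere 0 1)"

definition wedge_rel :: "nat \<times> complex \<Rightarrow> nat \<times> complex \<Rightarrow> bool" where
  "wedge_rel p q \<longleftrightarrow> p = q \<or> (snd p = 1 \<and> snd q = 1)"

definition wedge :: "nat \<Rightarrow> (nat \<times> complex) set topology" where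
  "wedge k = quot_top (prod_topology (discrete_topology {..<k}) circle) wedge_rel"

definition wpt :: "nat \<Rightarrow> nat \<Rightarrow> complex \<Rightarrow> (nat \<times> complex) set" where
  "wpt k c x = qcls (prod_topology (discrete_topology {..<k}) circle) wedge_rel (c, x)"

definition perm_rel :: "nat \<Rightarrow> (nat \<Rightarrow> 'a) \<Rightarrow> (nat \<Rightarrow> 'a) \<Rightarrow> bool" where
  "perm_rel n f g \<longleftrightarrow> (\<exists>\<pi>. \<pi> permutes {..<n} \<and> g = f \<circ> \<pi>)"

definition power_top :: "nat \<Rightarrow> 'a topology \<Rightarrow> (nat \<Rightarrow> 'a) topology" where
  "power_top n Y = product_topology (\<lambda>_. Y) {..<n}"

definition SP :: "nat \<Rightarrow> 'a topology \<Rightarrow> (nat \<Rightarrow> 'a) set topology" where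
  "SP n Y = quot_top (power_top n Y) (perm_rel n)"

text \<open>The elementary relation  <x,y,z..> ~ <*,xy,z..>  for x,y in the same circle c.\<close>
definition SPbar_step :: "nat \<Rightarrow> nat \<Rightarrow>
    (nat \<Rightarrow> (nat \<times> complex) set) set \<Rightarrow> (nat \<Rightarrow> (nat \<times> complex) set) set \<Rightarrow> bool" where
  "SPbar_step n k A B \<longleftrightarrow>
     A \<in> topspace (SP n (wedge k)) \<and>
     (\<exists>f \<in> A. \<exists>i j c x y. i < n \<and> j < n \<and> i \<noteq> j \<and> c < k \<and>
        x \<in> sphere 0 1 \<and> y \<in> sphere 0 1 \<and>
        f i = wpt k c x \<and> f j = wpt k c y \<and>
        B = qcls (power_top n (wedge k)) (perm_rel n) (f(i := wpt k c 1, j := wpt k c (x * y))))"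

definition SPbar :: "nat \<Rightarrow> nat \<Rightarrow> (nat \<Rightarrow> (nat \<times> complex) set) set set topology" where
  "SPbar n k = quot_top (SP n (wedge k)) (equivclp (SPbar_step n k))"

definition torus :: "nat \<Rightarrow> (nat \<Rightarrow> complex) topology" where
  "torus k = product_topology (\<lambda>_. circle) {..<k}"

text \<open>In the product CW structure, the cells of (S^1)^k are products of the 0-cell {1}
  or the open 1-cell (S^1 - {1}) in each factor; a cell has dimension equal to the number
  of 1-cell factors. Hence the n-skeleton consists of the points with at most n
  coordinates different from 1.\<close>
definition torus_skeleton :: "nat \<Rightarrow> nat \<Rightarrow> (nat \<Rightarrow> complex) topology" where
  "torus_skeleton n k = subtopology (torus k) {x. card {i \<in> {..<k}. x i \<noteq> 1} \<le> n}"

end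

theory Submission
  imports Defs
begin

(* Multiplying, circle by circle, the coordinates of the n points of a configuration in the wedge
   gives a continuous map from the n-th power of the wedge to the torus (S^1)^k.  It is invariant
   under permutations and under <x,y,...> ~ <*,xy,...>, so it descends to SPbar^n; as every point
   of the wedge moves at most one coordinate, its image is exactly the n-skeleton.  It is injective
   because the relation moves every configuration to a reduced one, with at most one point off the
   base point on each circle, and a reduced configuration is determined up to order by its product.
   A continuous bijection from a compact space onto a Hausdorff space is a homeomorphism. *)

section \<open>Quotient topology\<close>

lemma openin_quot_top:
  "openin (quot_top X r) U \<longleftrightarrow>
     U \<subseteq> qcls X r ` topspace X \<and> openin X {x \<in> topspace X. qcls X r x \<in> U}"
  unfolding quot_top_def by (simp add: topology_inverse'[OF istopology_quot])

lemma topspace_quot_top: "topspace (quot_top X r) = qcls X r ` topspace X"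
proof (rule antisym)
  have "{x \<in> topspace X. qcls X r x \<in> qcls X r ` topspace X} = topspace X"
    by blast
  then have "openin (quot_top X r) (qcls X r ` topspace X)"
    by (simp add: openin_quot_top)
  then show "qcls X r ` topspace X \<subseteq> topspace (quot_top X r)"
    by (rule openin_subset)
  show "topspace (quot_top X r) \<subseteq> qcls X r ` topspace X"
    using openin_quot_top openin_topspace by blast
qed

lemma mem_qcls: "y \<in> qcls X r x \<longleftrightarrow> y \<in> topspace X \<and> r x y"
  by (simp add: qcls_def)

lemma qcls_eqI: "equivp r \<Longrightarrow> r x y \<Longrightarrow> qcls X r x = qcls X r y"
  unfolding qcls_def by (metis equivp_def)

lemma qcls_eq_iff:
  assumes "equivp r" "y \<in> topspace X"
  shows "qcls X r x = qcls X r y \<longleftrightarrow> r x y"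
proof
  assume "qcls X r x = qcls X r y"
  moreover have "y \<in> qcls X r y"
    using assms by (simp add: mem_qcls equivp_reflp)
  ultimately show "r x y"
    by (metis mem_qcls)
qed (rule qcls_eqI[OF assms(1)])

lemma qcls_of_mem:
  assumes "equivp r" "C \<in> topspace (quot_top X r)" "x \<in> C"
  shows "C = qcls X r x"
proof -
  obtain y where "C = qcls X r y"
    using assms(2) by (auto simp: topspace_quot_top)
  with assms show ?thesis
    by (simp add: mem_qcls qcls_eqI)
qed

lemma continuous_map_qcls: "continuous_map X (quot_top X r) (qcls X r)"
  unfolding continuous_map_def topspace_quot_top openin_quot_top
  by (auto intro: openin_subopen)

lemma compact_space_quot_top: "compact_space X \<Longrightarrow> compact_space (quot_top X r)"
  unfolding compact_space_def
  using image_compactin[OF _ continuous_map_qcls, of X "topspace X" r] by (simp add: topspace_quot_top)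

definition quot_lift :: "('a \<Rightarrow> 'b) \<Rightarrow> 'a set \<Rightarrow> 'b" where
  "quot_lift h C = h (SOME x. x \<in> C)"

lemma quot_lift_qcls:
  assumes "equivp r" "x \<in> topspace X"
    and "\<And>y. y \<in> topspace X \<Longrightarrow> r x y \<Longrightarrow> h y = h x"
  shows "quot_lift h (qcls X r x) = h x"
proof -
  have "x \<in> qcls X r x"
    using assms(1,2) by (simp add: mem_qcls equivp_reflp)
  then have "(SOME y. y \<in> qcls X r x) \<in> qcls X r x"
    by (rule someI)
  then show ?thesis
    using assms(3) by (simp add: quot_lift_def mem_qcls)
qed

lemma continuous_map_quot_lift:
  assumes h: "continuous_map X Y h" and "equivp r"
    and resp: "\<And>x y. x \<in> topspace X \<Longrightarrow> y \<in> topspace X \<Longrightarrow> r x y \<Longrightarrow> h y = h x"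
  shows "continuous_map (quot_top X r) Y (quot_lift h)"
proof -
  have lift: "quot_lift h (qcls X r x) = h x" if "x \<in> topspace X" for x
    using quot_lift_qcls[OF \<open>equivp r\<close> that] resp that by blast
  have "{x \<in> topspace X. qcls X r x \<in> {C \<in> qcls X r ` topspace X. quot_lift h C \<in> U}}
          = {x \<in> topspace X. h x \<in> U}" for U
    using lift by auto
  then show ?thesis
    using h lift unfolding continuous_map_def topspace_quot_top openin_quot_top by auto
qed

section \<open>The wedge of circles and its coordinates\<close>

abbreviation circles :: "nat \<Rightarrow> (nat \<times> complex) topology" where
  "circles k \<equiv> prod_topology (discrete_topology {..<k}) circle"

lemma topspace_circle [simp]: "topspace circle = sphere 0 1"
  by (simp add: circle_def)

lemma equivp_wedge_rel: "equivp wedge_rel"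
  by (intro equivpI reflpI sympI transpI) (auto simp: wedge_rel_def)

lemma topspace_wedge: "topspace (wedge k) = {wpt k c z | c z. c < k \<and> z \<in> sphere 0 1}"
  unfolding wedge_def topspace_quot_top wpt_def topspace_prod_topology topspace_discrete_topology
    topspace_circle by blast

lemma wpt_in_wedge: "c < k \<Longrightarrow> z \<in> sphere 0 1 \<Longrightarrow> wpt k c z \<in> topspace (wedge k)"
  unfolding topspace_wedge by blast

lemma wpt_eq_iff:
  assumes "c < k" "c' < k" "z \<in> sphere 0 1" "z' \<in> sphere 0 1"
  shows "wpt k c z = wpt k c' z' \<longleftrightarrow> c = c' \<and> z = z' \<or> z = 1 \<and> z' = 1"
  using assms unfolding wpt_def by (simp add: qcls_eq_iff equivp_wedge_rel wedge_rel_def)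

definition circles_coord :: "nat \<Rightarrow> nat \<times> complex \<Rightarrow> complex" where
  "circles_coord c p = (if fst p = c then snd p else 1)"

definition wedge_coord :: "nat \<Rightarrow> (nat \<times> complex) set \<Rightarrow> complex" where
  "wedge_coord c = quot_lift (circles_coord c)"

lemma wedge_coord_wpt:
  assumes "c' < k" "z \<in> sphere 0 1"
  shows "wedge_coord c (wpt k c' z) = (if c' = c then z else 1)"
  unfolding wedge_coord_def wpt_def
  using assms by (subst quot_lift_qcls) (auto simp: equivp_wedge_rel wedge_rel_def circles_coord_def)

lemma continuous_map_circles_coord: "continuous_map (circles k) euclidean (circles_coord c)"
  unfolding continuous_map_def
proof (intro conjI allI impI)
  fix V :: "complex set"
  assume "openin euclidean V"
  then have open_arc: "openin circle (sphere 0 1 \<inter> V)"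
    by (auto simp: circle_def openin_subtopology)
  have open_circle: "openin circle (sphere 0 1)"
    by (metis openin_topspace topspace_circle)
  have "{p \<in> topspace (circles k). circles_coord c p \<in> V} =
      ({c} \<inter> {..<k}) \<times> (sphere 0 1 \<inter> V) \<union> (if 1 \<in> V then ({..<k} - {c}) \<times> sphere 0 1 else {})"
    by (auto simp: circles_coord_def)
  then show "openin (circles k) {p \<in> topspace (circles k). circles_coord c p \<in> V}"
    by (simp only:) (intro openin_Un; auto simp: openin_prod_Times_iff open_arc open_circle)
qed simp

lemma continuous_map_wedge_coord: "continuous_map (wedge k) euclidean (wedge_coord c)"
  unfolding wedge_def wedge_coord_def
  by (rule continuous_map_quot_lift[OF continuous_map_circles_coord equivp_wedge_rel])
     (auto simp: wedge_rel_def circles_coord_def)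

lemma wedge_coord_in_sphere: "w \<in> topspace (wedge k) \<Longrightarrow> wedge_coord c w \<in> sphere 0 1"
  unfolding topspace_wedge by (auto simp: wedge_coord_wpt)

lemma wedge_pointE:
  assumes "w \<in> topspace (wedge k)"
  obtains c z where "c < k" "z \<in> sphere 0 1" "w = wpt k c z"
  using assms unfolding topspace_wedge by blast

lemma wedge_coord_eq_iff:
  assumes "w \<in> topspace (wedge k)" "c < k" "z \<in> sphere 0 1" "z \<noteq> 1"
  shows "wedge_coord c w = z \<longleftrightarrow> w = wpt k c z"
proof -
  obtain c' z' where w: "c' < k" "z' \<in> sphere 0 1" "w = wpt k c' z'"
    using assms(1) by (rule wedge_pointE)
  have "wpt k c' z' = wpt k c z \<longleftrightarrow> c' = c \<and> z' = z \<or> z' = 1 \<and> z = 1"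
    using w assms by (simp only: wpt_eq_iff)
  then show ?thesis
    using w assms by (simp add: wedge_coord_wpt)
qed

lemma wedge_coord_neq_1E:
  assumes "w \<in> topspace (wedge k)" "wedge_coord c w \<noteq> 1"
  obtains "c < k" "w = wpt k c (wedge_coord c w)"
proof -
  obtain c' z where w: "c' < k" "z \<in> sphere 0 1" "w = wpt k c' z"
    using assms(1) by (rule wedge_pointE)
  then have "c' = c"
    using assms(2) by (simp add: wedge_coord_wpt split: if_splits)
  with w show thesis
    by (intro that) (simp_all add: wedge_coord_wpt)
qed

lemma wedge_coord_neq_1_unique:
  assumes "w \<in> topspace (wedge k)" "wedge_coord c w \<noteq> 1" "wedge_coord c' w \<noteq> 1"
  shows "c = c'"
proof -
  obtain "c < k" "w = wpt k c (wedge_coord c w)"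
    using assms(1,2) by (rule wedge_coord_neq_1E)
  with assms(1,3) show ?thesis
    by (metis wedge_coord_in_sphere wedge_coord_wpt)
qed

abbreviation configs :: "nat \<Rightarrow> nat \<Rightarrow> (nat \<Rightarrow> (nat \<times> complex) set) set" where
  "configs n k \<equiv> topspace (power_top n (wedge k))"

lemma topspace_power_top: "topspace (power_top n Y) = (\<Pi>\<^sub>E i\<in>{..<n}. topspace Y)"
  by (simp add: power_top_def)

lemma fun_upd_in_topspace_power_top:
  "f \<in> topspace (power_top n Y) \<Longrightarrow> i < n \<Longrightarrow> y \<in> topspace Y \<Longrightarrow>
    f(i := y) \<in> topspace (power_top n Y)"
  by (auto simp: topspace_power_top PiE_iff extensional_def)

lemma continuous_map_prod_euclidean:
  fixes f :: "'a \<Rightarrow> 'b \<Rightarrow> 'c::{real_normed_algebra, comm_ring_1}"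
  shows "(\<And>i. i \<in> I \<Longrightarrow> continuous_map X euclidean (\<lambda>x. f x i)) \<Longrightarrow>
    continuous_map X euclidean (\<lambda>x. \<Prod>i\<in>I. f x i)"
  by (simp add: continuous_map_atin tendsto_prod)

lemma prod_in_unit_sphere:
  fixes g :: "'a \<Rightarrow> 'b::real_normed_field"
  shows "(\<And>i. i \<in> A \<Longrightarrow> g i \<in> sphere 0 1) \<Longrightarrow> prod g A \<in> sphere 0 1"
  by (simp flip: prod_norm)

definition config_prod :: "nat \<Rightarrow> nat \<Rightarrow> (nat \<Rightarrow> (nat \<times> complex) set) \<Rightarrow> nat \<Rightarrow> complex" where
  "config_prod n k f = (\<lambda>c\<in>{..<k}. \<Prod>i<n. wedge_coord c (f i))"

lemma config_prod_apply: "c < k \<Longrightarrow> config_prod n k f c = (\<Prod>i<n. wedge_coord c (f i))"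
  by (simp add: config_prod_def)

lemma continuous_map_config_prod:
  "continuous_map (power_top n (wedge k)) (torus k) (config_prod n k)"
  unfolding torus_def continuous_map_componentwise
proof (intro conjI ballI)
  show "config_prod n k ` configs n k \<subseteq> extensional {..<k}"
    by (auto simp: config_prod_def)
next
  fix c
  assume "c \<in> {..<k}"
  have "continuous_map (power_top n (wedge k)) euclidean (\<lambda>f. wedge_coord c (f i))" if "i < n" for i
  proof -
    have "continuous_map (power_top n (wedge k)) (wedge k) (\<lambda>f. f i)"
      using that unfolding power_top_def by (metis continuous_map_product_projection lessThan_iff)
    then show ?thesis
      using continuous_map_compose[OF _ continuous_map_wedge_coord] by (simp add: o_def)
  qed
  then have "continuous_map (power_top n (wedge k)) euclidean (\<lambda>f. \<Prod>i<n. wedge_coord c (f i))"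
    by (intro continuous_map_prod_euclidean) simp
  moreover have "(\<Prod>i<n. wedge_coord c (f i)) \<in> sphere 0 1" if "f \<in> configs n k" for f
    using that by (intro prod_in_unit_sphere wedge_coord_in_sphere) (auto simp: topspace_power_top)
  ultimately show "continuous_map (power_top n (wedge k)) circle (\<lambda>f. config_prod n k f c)"
    using \<open>c \<in> {..<k}\<close> by (simp add: circle_def continuous_map_in_subtopology config_prod_apply)
qed

lemma equivp_perm_rel: "equivp (perm_rel n)"
proof (rule equivpI)
  show "reflp (perm_rel n)"
    by (rule reflpI) (auto simp: perm_rel_def intro: permutes_id)
  show "symp (perm_rel n)"
  proof (rule sympI)
    fix f g
    assume "perm_rel n f g"
    then obtain p where p: "p permutes {..<n}" "g = f \<circ> p"
      by (auto simp: perm_rel_def)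
    then have "f = g \<circ> inv p"
      by (simp add: o_assoc[symmetric] permutes_inv_o(1))
    then show "perm_rel n g f"
      using permutes_inv[OF p(1)] by (auto simp: perm_rel_def)
  qed
  show "transp (perm_rel n)"
  proof (rule transpI)
    fix f g h
    assume "perm_rel n f g" "perm_rel n g h"
    then obtain p q where "p permutes {..<n}" "g = f \<circ> p" "q permutes {..<n}" "h = g \<circ> q"
      by (auto simp: perm_rel_def)
    then show "perm_rel n f h"
      unfolding perm_rel_def by (metis comp_assoc permutes_compose)
  qed
qed

lemma config_prod_perm_rel:
  assumes "perm_rel n f g"
  shows "config_prod n k g = config_prod n k f"
proof -
  obtain p where p: "p permutes {..<n}" "g = f \<circ> p"
    using assms by (auto simp: perm_rel_def)
  have "(\<Prod>i<n. wedge_coord c (g i)) = (\<Prod>i<n. wedge_coord c (f i))" for c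
    using prod.permute[OF p(1), of "\<lambda>i. wedge_coord c (f i)"] p(2) by (simp add: comp_def)
  then show ?thesis
    by (simp add: config_prod_def)
qed

lemma config_prod_merge:
  assumes "i < n" "j < n" "i \<noteq> j" "c < k" "x \<in> sphere 0 1" "y \<in> sphere 0 1"
    and "f i = wpt k c x" "f j = wpt k c y"
  shows "config_prod n k (f(i := wpt k c 1, j := wpt k c (x * y))) = config_prod n k f"
proof -
  let ?g = "f(i := wpt k c 1, j := wpt k c (x * y))"
  have split: "(\<Prod>l<n. h l) = (\<Prod>l\<in>{..<n} - {i, j}. h l) * (h i * h j)" for h :: "nat \<Rightarrow> complex"
    using assms(1-3) by (simp add: prod.subset_diff[of "{i, j}" "{..<n}"])
  have "x * y \<in> sphere 0 1"
    using assms(5,6) by (simp add: norm_mult)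
  have "(\<Prod>l<n. wedge_coord d (?g l)) = (\<Prod>l<n. wedge_coord d (f l))" for d
  proof -
    have rest: "(\<Prod>l\<in>{..<n} - {i, j}. wedge_coord d (?g l)) =
        (\<Prod>l\<in>{..<n} - {i, j}. wedge_coord d (f l))"
      by (rule prod.cong) auto
    have pair: "wedge_coord d (?g i) * wedge_coord d (?g j) = wedge_coord d (f i) * wedge_coord d (f j)"
      using assms \<open>x * y \<in> sphere 0 1\<close> by (simp add: wedge_coord_wpt)
    show ?thesis
      unfolding split[of "\<lambda>l. wedge_coord d (?g l)"] split[of "\<lambda>l. wedge_coord d (f l)"] rest pair ..
  qed
  then show ?thesis
    by (simp add: config_prod_def)
qed

abbreviation sp_cls :: "nat \<Rightarrow> nat \<Rightarrow> (nat \<Rightarrow> (nat \<times> complex) set) \<Rightarrow> (nat \<Rightarrow> (nat \<times> complex) set) set"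
  where "sp_cls n k \<equiv> qcls (power_top n (wedge k)) (perm_rel n)"

abbreviation spbar_cls :: "nat \<Rightarrow> nat \<Rightarrow> (nat \<Rightarrow> (nat \<times> complex) set) set \<Rightarrow>
    (nat \<Rightarrow> (nat \<times> complex) set) set set"
  where "spbar_cls n k \<equiv> qcls (SP n (wedge k)) (equivclp (SPbar_step n k))"

definition SP_prod :: "nat \<Rightarrow> nat \<Rightarrow> (nat \<Rightarrow> (nat \<times> complex) set) set \<Rightarrow> nat \<Rightarrow> complex" where
  "SP_prod n k = quot_lift (config_prod n k)"

definition SPbar_prod :: "nat \<Rightarrow> nat \<Rightarrow> (nat \<Rightarrow> (nat \<times> complex) set) set set \<Rightarrow> nat \<Rightarrow> complex" where
  "SPbar_prod n k = quot_lift (SP_prod n k)"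

lemma topspace_SP: "topspace (SP n (wedge k)) = sp_cls n k ` configs n k"
  by (simp add: SP_def topspace_quot_top)

lemma topspace_SPbar: "topspace (SPbar n k) = spbar_cls n k ` sp_cls n k ` configs n k"
  by (simp add: SPbar_def topspace_quot_top topspace_SP)

lemma SP_prod_sp_cls: "f \<in> configs n k \<Longrightarrow> SP_prod n k (sp_cls n k f) = config_prod n k f"
  unfolding SP_prod_def by (rule quot_lift_qcls[OF equivp_perm_rel]) (auto intro: config_prod_perm_rel)

lemma continuous_map_SP_prod: "continuous_map (SP n (wedge k)) (torus k) (SP_prod n k)"
  unfolding SP_def SP_prod_def
  by (rule continuous_map_quot_lift[OF continuous_map_config_prod equivp_perm_rel])
     (rule config_prod_perm_rel)

lemma SP_prod_SPbar_step:
  assumes "SPbar_step n k A B"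
  shows "SP_prod n k B = SP_prod n k A"
proof -
  obtain f i j c x y where A: "A \<in> topspace (SP n (wedge k))" "f \<in> A"
    and ijc: "i < n" "j < n" "i \<noteq> j" "c < k" and xy: "x \<in> sphere 0 1" "y \<in> sphere 0 1"
    and f_ij: "f i = wpt k c x" "f j = wpt k c y"
    and B: "B = sp_cls n k (f(i := wpt k c 1, j := wpt k c (x * y)))"
    using assms unfolding SPbar_step_def by blast
  have A_cls: "A = sp_cls n k f"
    using A by (intro qcls_of_mem[OF equivp_perm_rel]) (simp_all add: SP_def)
  with A(2) have f: "f \<in> configs n k"
    by (simp add: mem_qcls)
  have "x * y \<in> sphere 0 1"
    using xy by (simp add: norm_mult)
  then have "f(i := wpt k c 1, j := wpt k c (x * y)) \<in> configs n k"
    using f ijc by (intro fun_upd_in_topspace_power_top wpt_in_wedge) auto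
  then show ?thesis
    using f A_cls B by (simp add: SP_prod_sp_cls config_prod_merge[OF ijc xy f_ij])
qed

lemma SP_prod_equivclp: "equivclp (SPbar_step n k) A B \<Longrightarrow> SP_prod n k B = SP_prod n k A"
  by (induction rule: equivclp_induct) (auto dest: SP_prod_SPbar_step)

lemma SPbar_prod_cls:
  assumes "f \<in> configs n k"
  shows "SPbar_prod n k (spbar_cls n k (sp_cls n k f)) = config_prod n k f"
proof -
  have "SPbar_prod n k (spbar_cls n k (sp_cls n k f)) = SP_prod n k (sp_cls n k f)"
    unfolding SPbar_prod_def using assms
    by (intro quot_lift_qcls) (auto simp: topspace_SP SP_prod_equivclp)
  then show ?thesis
    using assms by (simp add: SP_prod_sp_cls)
qed

lemma continuous_map_SPbar_prod: "continuous_map (SPbar n k) (torus k) (SPbar_prod n k)"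
  unfolding SPbar_def SPbar_prod_def
  by (rule continuous_map_quot_lift[OF continuous_map_SP_prod]) (auto simp: SP_prod_equivclp)

section \<open>Reduced configurations\<close>

definition reduced :: "nat \<Rightarrow> nat \<Rightarrow> (nat \<Rightarrow> (nat \<times> complex) set) \<Rightarrow> bool" where
  "reduced n k f \<longleftrightarrow>
     (\<forall>c<k. \<forall>i<n. \<forall>j<n. wedge_coord c (f i) \<noteq> 1 \<longrightarrow> wedge_coord c (f j) \<noteq> 1 \<longrightarrow> i = j)"

lemma reducedD:
  "reduced n k f \<Longrightarrow> c < k \<Longrightarrow> i < n \<Longrightarrow> j < n \<Longrightarrow> wedge_coord c (f i) \<noteq> 1 \<Longrightarrow>
    wedge_coord c (f j) \<noteq> 1 \<Longrightarrow> i = j"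
  by (simp add: reduced_def)

definition off_base :: "nat \<Rightarrow> nat \<Rightarrow> (nat \<Rightarrow> (nat \<times> complex) set) \<Rightarrow> nat set" where
  "off_base n k f = {i \<in> {..<n}. f i \<noteq> wpt k 0 1}"

lemma wpt_eq_base_iff: "c < k \<Longrightarrow> z \<in> sphere 0 1 \<Longrightarrow> wpt k c z = wpt k 0 1 \<longleftrightarrow> z = 1"
  by (auto simp: wpt_eq_iff)

lemma SPbar_stepI:
  assumes "f \<in> configs n k" "i < n" "j < n" "i \<noteq> j" "c < k" "x \<in> sphere 0 1" "y \<in> sphere 0 1"
    and "f i = wpt k c x" "f j = wpt k c y"
  shows "SPbar_step n k (sp_cls n k f) (sp_cls n k (f(i := wpt k c 1, j := wpt k c (x * y))))"
proof -
  have "f \<in> sp_cls n k f" "sp_cls n k f \<in> topspace (SP n (wedge k))"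
    using assms(1) by (simp_all add: mem_qcls equivp_reflp[OF equivp_perm_rel] topspace_SP)
  then show ?thesis
    unfolding SPbar_step_def using assms(2-) by blast
qed

lemma SPbar_step_to_fewer_off_base:
  assumes f: "f \<in> configs n k" and "\<not> reduced n k f"
  obtains g where "g \<in> configs n k" "SPbar_step n k (sp_cls n k f) (sp_cls n k g)"
    "card (off_base n k g) < card (off_base n k f)"
proof -
  obtain c i j where ijc: "i < n" "j < n" "i \<noteq> j" "c < k"
    and off: "wedge_coord c (f i) \<noteq> 1" "wedge_coord c (f j) \<noteq> 1"
    using assms(2) unfolding reduced_def by blast
  define x y where "x = wedge_coord c (f i)" and "y = wedge_coord c (f j)"
  have fij: "f i \<in> topspace (wedge k)" "f j \<in> topspace (wedge k)"
    using f ijc by (auto simp: topspace_power_top)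
  then have xy: "x \<in> sphere 0 1" "y \<in> sphere 0 1"
    unfolding x_def y_def by (blast intro: wedge_coord_in_sphere)+
  have f_ij: "f i = wpt k c x" "f j = wpt k c y"
    using wedge_coord_neq_1E[OF fij(1) off(1)] wedge_coord_neq_1E[OF fij(2) off(2)]
    unfolding x_def y_def by blast+
  have "x \<noteq> 1" "y \<noteq> 1"
    using off by (simp_all add: x_def y_def)
  define g where "g = f(i := wpt k c 1, j := wpt k c (x * y))"
  have "x * y \<in> sphere 0 1"
    using xy by (simp add: norm_mult)
  then have g: "g \<in> configs n k"
    unfolding g_def using f ijc by (intro fun_upd_in_topspace_power_top wpt_in_wedge) auto
  have "SPbar_step n k (sp_cls n k f) (sp_cls n k g)"
    unfolding g_def using f ijc xy f_ij by (rule SPbar_stepI)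
  moreover have "card (off_base n k g) < card (off_base n k f)"
  proof (rule psubset_card_mono)
    have "g i = wpt k 0 1"
      using ijc by (simp add: g_def wpt_eq_iff)
    moreover have "f j \<noteq> wpt k 0 1"
      using ijc xy \<open>y \<noteq> 1\<close> f_ij by (simp add: wpt_eq_base_iff)
    ultimately have "l \<in> off_base n k f - {i}" if "l \<in> off_base n k g" for l
      using that ijc(3) by (cases "l = j") (simp_all add: off_base_def g_def split: if_splits)
    then have "off_base n k g \<subseteq> off_base n k f - {i}"
      by blast
    moreover have "i \<in> off_base n k f"
      using ijc xy \<open>x \<noteq> 1\<close> f_ij by (simp add: off_base_def wpt_eq_base_iff)
    ultimately show "off_base n k g \<subset> off_base n k f"
      by blast
  qed (simp add: off_base_def)
  ultimately show thesis
    using g that by blast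
qed

lemma reduced_representative:
  "f \<in> configs n k \<Longrightarrow>
    \<exists>g \<in> configs n k. reduced n k g \<and> equivclp (SPbar_step n k) (sp_cls n k f) (sp_cls n k g)"
proof (induction "card (off_base n k f)" arbitrary: f rule: less_induct)
  case less
  show ?case
  proof (cases "reduced n k f")
    case False
    obtain f' where f': "f' \<in> configs n k" and step: "SPbar_step n k (sp_cls n k f) (sp_cls n k f')"
      and fewer: "card (off_base n k f') < card (off_base n k f)"
      using less.prems False by (rule SPbar_step_to_fewer_off_base)
    obtain g where "g \<in> configs n k" "reduced n k g"
      and "equivclp (SPbar_step n k) (sp_cls n k f') (sp_cls n k g)"
      using less.hyps[OF fewer f'] by blast
    moreover note equivclp_trans[OF r_into_equivclp[of "SPbar_step n k", OF step]]
    ultimately show ?thesis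
      by blast
  qed (use less.prems in auto)
qed

lemma reduced_config_prod:
  assumes "reduced n k f" "c < k" "i < n" "wedge_coord c (f i) \<noteq> 1"
  shows "config_prod n k f c = wedge_coord c (f i)"
proof -
  have "(\<Prod>l\<in>{..<n} - {i}. wedge_coord c (f l)) = 1"
    using reducedD[OF assms(1,2)] assms(3,4) by (intro prod.neutral) blast
  then show ?thesis
    using assms(2,3) by (simp add: config_prod_apply prod.remove)
qed

lemma card_reduced_eq_wpt:
  assumes "reduced n k f" "f \<in> configs n k" "c < k" "z \<in> sphere 0 1" "z \<noteq> 1"
  shows "card {i \<in> {..<n}. f i = wpt k c z} = (if config_prod n k f c = z then 1 else 0)"
proof -
  have eq: "{i \<in> {..<n}. f i = wpt k c z} = {i \<in> {..<n}. wedge_coord c (f i) = z}"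
  proof (rule Collect_cong)
    fix i
    show "i \<in> {..<n} \<and> f i = wpt k c z \<longleftrightarrow> i \<in> {..<n} \<and> wedge_coord c (f i) = z"
    proof (cases "i < n")
      case True
      then have "f i \<in> topspace (wedge k)"
        using assms(2) by (auto simp: topspace_power_top)
      then show ?thesis
        using wedge_coord_eq_iff[OF _ assms(3-5)] by simp
    qed simp
  qed
  show ?thesis
  proof (cases "\<exists>i<n. wedge_coord c (f i) = z")
    case True
    then obtain i where i: "i < n" "wedge_coord c (f i) = z"
      by blast
    have "l = i" if "l < n" "wedge_coord c (f l) = z" for l
      using reducedD[OF assms(1,3) that(1) i(1)] that(2) i(2) assms(5) by simp
    then have "{i \<in> {..<n}. wedge_coord c (f i) = z} = {i}"
      using i by blast
    moreover have "config_prod n k f c = z"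
      using reduced_config_prod[OF assms(1,3) i(1)] i(2) assms(5) by simp
    ultimately show ?thesis
      unfolding eq by simp
  next
    case False
    have "config_prod n k f c \<noteq> z"
    proof (cases "\<exists>i<n. wedge_coord c (f i) \<noteq> 1")
      case True
      then obtain i where "i < n" "wedge_coord c (f i) \<noteq> 1"
        by blast
      with False show ?thesis
        using reduced_config_prod[OF assms(1,3) \<open>i < n\<close>] by simp
    qed (use assms(3,5) in \<open>simp add: config_prod_apply\<close>)
    with False show ?thesis
      unfolding eq by simp
  qed
qed

lemma multiset_eqI_count_except:
  assumes "size M = size N" "\<And>x. x \<noteq> b \<Longrightarrow> count M x = count N x"
  shows "M = N"
proof -
  have off_b: "{#x \<in># M. x \<noteq> b#} = {#x \<in># N. x \<noteq> b#}"
    by (rule multiset_eqI) (simp add: assms(2))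
  have "size A = count A b + size {#x \<in># A. x \<noteq> b#}" for A :: "'a multiset"
    by (metis filter_eq_replicate_mset multiset_partition size_replicate_mset size_union)
  then have "count M b = count N b"
    using assms(1) off_b by (metis add_right_cancel)
  then show ?thesis
    using assms(2) by (metis multiset_eqI)
qed

lemma perm_rel_if_image_mset_eq:
  assumes "f \<in> extensional {..<n}" "g \<in> extensional {..<n}"
    and "image_mset f (mset_set {..<n}) = image_mset g (mset_set {..<n})"
  shows "perm_rel n g f"
proof -
  have "mset (map f [0..<n]) = mset (map g [0..<n])"
    using assms(3) by (simp add: atLeast0LessThan)
  then obtain p where p: "p permutes {..<length (map g [0..<n])}"
    "permute_list p (map g [0..<n]) = map f [0..<n]"
    by (rule mset_eq_permutation)
  then have p_n: "p permutes {..<n}"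
    by simp
  have "f i = g (p i)" for i
  proof (cases "i < n")
    case True
    then have "f i = permute_list p (map g [0..<n]) ! i"
      by (simp add: p(2))
    also have "\<dots> = g (p i)"
      using permute_list_nth[OF p(1)] permutes_in_image[OF p_n] True by simp
    finally show ?thesis .
  next
    case False
    then show ?thesis
      using extensional_arb[OF assms(1)] extensional_arb[OF assms(2)] permutes_not_in[OF p_n] by simp
  qed
  then show ?thesis
    unfolding perm_rel_def using p_n by (auto simp: fun_eq_iff)
qed

lemma perm_rel_if_reduced_config_prod_eq:
  assumes f: "f \<in> configs n k" and g: "g \<in> configs n k" and "reduced n k f" "reduced n k g"
    and "config_prod n k f = config_prod n k g"
  shows "perm_rel n g f"
proof (rule perm_rel_if_image_mset_eq)
  show "f \<in> extensional {..<n}" "g \<in> extensional {..<n}"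
    using f g by (simp_all add: topspace_power_top PiE_iff)
  show "image_mset f (mset_set {..<n}) = image_mset g (mset_set {..<n})"
  proof (rule multiset_eqI_count_except[where b = "wpt k 0 1"])
    fix w
    assume "w \<noteq> wpt k 0 1"
    have "card {i \<in> {..<n}. f i = w} = card {i \<in> {..<n}. g i = w}"
    proof (cases "w \<in> topspace (wedge k)")
      case True
      then obtain c z where cz: "c < k" "z \<in> sphere 0 1" "w = wpt k c z"
        by (rule wedge_pointE)
      with \<open>w \<noteq> wpt k 0 1\<close> have "z \<noteq> 1"
        using wpt_eq_base_iff by blast
      then show ?thesis
        using card_reduced_eq_wpt[OF assms(3) f cz(1,2)] card_reduced_eq_wpt[OF assms(4) g cz(1,2)]
          assms(5) cz(3) by simp
    next
      case False
      then have "{i \<in> {..<n}. f i = w} = {}" "{i \<in> {..<n}. g i = w} = {}"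
        using f g by (auto simp: topspace_power_top PiE_iff)
      then show ?thesis
        by (simp only: card.empty)
    qed
    then show "count (image_mset f (mset_set {..<n})) w = count (image_mset g (mset_set {..<n})) w"
      by (simp add: count_image_mset_eq_card_vimage)
  qed simp
qed

section \<open>The image is the n-skeleton\<close>

lemma topspace_torus_skeleton:
  "topspace (torus_skeleton n k) =
    {t \<in> (\<Pi>\<^sub>E c\<in>{..<k}. sphere 0 1). card {c \<in> {..<k}. t c \<noteq> 1} \<le> n}"
  by (auto simp: torus_skeleton_def torus_def)

lemma card_config_prod_neq_1_le:
  assumes f: "f \<in> configs n k"
  shows "card {c \<in> {..<k}. config_prod n k f c \<noteq> 1} \<le> n"
proof -
  let ?moved = "\<lambda>i. {c \<in> {..<k}. wedge_coord c (f i) \<noteq> 1}"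
  have "{c \<in> {..<k}. config_prod n k f c \<noteq> 1} \<subseteq> (\<Union>i<n. ?moved i)"
    by (force simp: config_prod_apply intro: prod.neutral)
  then have "card {c \<in> {..<k}. config_prod n k f c \<noteq> 1} \<le> card (\<Union>i<n. ?moved i)"
    by (intro card_mono) auto
  also have "\<dots> \<le> (\<Sum>i<n. card (?moved i))"
    by (rule card_UN_le) simp
  also have "\<dots> \<le> (\<Sum>i<n. 1)"
  proof (rule sum_mono)
    fix i
    assume "i \<in> {..<n}"
    then have "f i \<in> topspace (wedge k)"
      using f by (auto simp: topspace_power_top)
    then show "card (?moved i) \<le> 1"
      using wedge_coord_neq_1_unique by (auto simp: card_le_Suc0_iff_eq)
  qed
  finally show ?thesis
    by simp
qed

lemma config_prod_in_torus_skeleton: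
  "f \<in> configs n k \<Longrightarrow> config_prod n k f \<in> topspace (torus_skeleton n k)"
  using continuous_map_image_subset_topspace[OF continuous_map_config_prod] card_config_prod_neq_1_le
  by (auto simp: torus_skeleton_def)

lemma torus_skeleton_config_prodE:
  assumes "0 < k" and t: "t \<in> topspace (torus_skeleton n k)"
  obtains f where "f \<in> configs n k" "config_prod n k f = t"
proof -
  define S where "S = {c \<in> {..<k}. t c \<noteq> 1}"
  have t_sphere: "t \<in> (\<Pi>\<^sub>E c\<in>{..<k}. sphere 0 1)" and "card S \<le> n"
    using t by (simp_all add: topspace_torus_skeleton S_def)
  have "finite S"
    by (simp add: S_def)
  then obtain s where s: "bij_betw s {0..<card S} S"
    using ex_bij_betw_nat_finite by blast
  then have s_S: "s i \<in> S" and s_n: "i < n" if "i < card S" for i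
    using that \<open>card S \<le> n\<close> by (auto simp: bij_betw_def)
  have s_k: "s i < k" if "i < card S" for i
    using s_S[OF that] by (simp add: S_def)
  have t_s: "t (s i) \<in> sphere 0 1" if "i < card S" for i
    using PiE_mem[OF t_sphere] s_k[OF that] by simp
  define f where
    "f i = (if i < card S then wpt k (s i) (t (s i)) else if i < n then wpt k 0 1 else undefined)" for i
  have f_S: "f i = wpt k (s i) (t (s i))" if "i < card S" for i
    using that by (simp add: f_def)
  have f_base: "f i = wpt k 0 1" if "card S \<le> i" "i < n" for i
    using that by (simp add: f_def)
  have f: "f \<in> configs n k"
    unfolding topspace_power_top
  proof (rule PiE_I)
    fix i
    assume "i \<in> {..<n}"
    then show "f i \<in> topspace (wedge k)"
      using f_S f_base s_k t_s assms(1) by (cases "i < card S") (simp_all add: wpt_in_wedge)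
  next
    fix i
    assume "i \<notin> {..<n}"
    then show "f i = undefined"
      using \<open>card S \<le> n\<close> by (simp add: f_def)
  qed
  have coord: "wedge_coord c (f i) = (if i < card S \<and> s i = c then t c else 1)" if "i < n" for i c
  proof (cases "i < card S")
    case True
    then show ?thesis
      using s_k t_s by (simp add: f_S wedge_coord_wpt)
  next
    case False
    then show ?thesis
      using that assms(1) by (simp add: f_base wedge_coord_wpt)
  qed
  have "reduced n k f"
    unfolding reduced_def
  proof (intro allI impI)
    fix c i j
    assume "c < k" "i < n" "j < n" "wedge_coord c (f i) \<noteq> 1" "wedge_coord c (f j) \<noteq> 1"
    then have "i < card S" "j < card S" "s i = s j"
      by (simp_all add: coord split: if_splits)
    then show "i = j"
      using s by (auto simp: bij_betw_def inj_on_def)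
  qed
  have "config_prod n k f c = t c" for c
  proof (cases "c \<in> S")
    case True
    then have "c \<in> s ` {0..<card S}"
      using s by (simp add: bij_betw_def)
    then obtain i where i: "i < card S" "s i = c"
      by auto
    have "c < k" "t c \<noteq> 1"
      using True by (simp_all add: S_def)
    moreover have "wedge_coord c (f i) = t c"
      using coord[OF s_n[OF i(1)]] i by simp
    ultimately show ?thesis
      using reduced_config_prod[OF \<open>reduced n k f\<close> \<open>c < k\<close> s_n[OF i(1)]] by simp
  next
    case False
    show ?thesis
    proof (cases "c < k")
      case True
      have "wedge_coord c (f i) = 1" if "i < n" for i
        using coord[OF that] s_S False by auto
      moreover have "t c = 1"
        using False True by (simp add: S_def)
      ultimately show ?thesis
        using True by (simp add: config_prod_apply prod.neutral)
    next
      case False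
      then show ?thesis
        using PiE_arb[OF t_sphere] by (simp add: config_prod_def)
    qed
  qed
  then show thesis
    using f that by blast
qed

lemma SPbar_prod_image:
  assumes "0 < k"
  shows "SPbar_prod n k ` topspace (SPbar n k) = topspace (torus_skeleton n k)"
proof
  show "SPbar_prod n k ` topspace (SPbar n k) \<subseteq> topspace (torus_skeleton n k)"
    by (auto simp: topspace_SPbar SPbar_prod_cls config_prod_in_torus_skeleton)
  show "topspace (torus_skeleton n k) \<subseteq> SPbar_prod n k ` topspace (SPbar n k)"
  proof
    fix t
    assume "t \<in> topspace (torus_skeleton n k)"
    then obtain f where "f \<in> configs n k" "config_prod n k f = t"
      using assms torus_skeleton_config_prodE by blast
    then show "t \<in> SPbar_prod n k ` topspace (SPbar n k)"
      unfolding topspace_SPbar by (force simp: SPbar_prod_cls)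
  qed
qed

lemma inj_on_SPbar_prod: "inj_on (SPbar_prod n k) (topspace (SPbar n k))"
proof (rule inj_onI)
  fix C D
  assume "C \<in> topspace (SPbar n k)" "D \<in> topspace (SPbar n k)"
    and eq: "SPbar_prod n k C = SPbar_prod n k D"
  then obtain f g where f: "f \<in> configs n k" "C = spbar_cls n k (sp_cls n k f)"
    and g: "g \<in> configs n k" "D = spbar_cls n k (sp_cls n k g)"
    unfolding topspace_SPbar by blast
  obtain f' where f': "f' \<in> configs n k" "reduced n k f'"
    and f_f': "equivclp (SPbar_step n k) (sp_cls n k f) (sp_cls n k f')"
    using reduced_representative[OF f(1)] by blast
  obtain g' where g': "g' \<in> configs n k" "reduced n k g'"
    and g_g': "equivclp (SPbar_step n k) (sp_cls n k g) (sp_cls n k g')"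
    using reduced_representative[OF g(1)] by blast
  have "config_prod n k f' = config_prod n k g'"
    using eq f g f' g' SP_prod_equivclp[OF f_f'] SP_prod_equivclp[OF g_g']
    by (simp add: SPbar_prod_cls SP_prod_sp_cls)
  then have "sp_cls n k f' = sp_cls n k g'"
    using perm_rel_if_reduced_config_prod_eq[OF g'(1) f'(1) g'(2) f'(2)]
    by (metis qcls_eqI equivp_perm_rel)
  then have "equivclp (SPbar_step n k) (sp_cls n k f) (sp_cls n k g)"
    using f_f' g_g' by (metis equivclp_sym equivclp_trans)
  then show "C = D"
    using f(2) g(2) by (simp add: qcls_eqI)
qed

lemma compact_space_wedge: "compact_space (wedge k)"
  unfolding wedge_def
proof (rule compact_space_quot_top)
  have "compact_space circle"
    unfolding circle_def by (simp add: compact_space_subtopology)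
  then show "compact_space (circles k)"
    by (simp add: compact_space_prod_topology compact_space_discrete_topology)
qed

lemma compact_space_SPbar: "compact_space (SPbar n k)"
  unfolding SPbar_def SP_def power_top_def
  by (intro compact_space_quot_top) (simp add: compact_space_product_topology compact_space_wedge)

lemma Hausdorff_space_torus_skeleton: "Hausdorff_space (torus_skeleton n k)"
  unfolding torus_skeleton_def torus_def circle_def
  by (intro Hausdorff_space_subtopology) (simp add: Hausdorff_space_product_topology Hausdorff_space_subtopology)

theorem mainTheorem2:
  fixes n k :: nat
  assumes "n \<ge> 1" and "k \<ge> 1"
  shows "SPbar n k homeomorphic_space torus_skeleton n k"
proof -
  (* only k \<ge> 1 is used: for n = 0 both spaces are a single point *)
  have image: "SPbar_prod n k ` topspace (SPbar n k) = topspace (torus_skeleton n k)"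
    using assms(2) by (simp add: SPbar_prod_image)
  then have "continuous_map (SPbar n k) (torus_skeleton n k) (SPbar_prod n k)"
    using continuous_map_SPbar_prod by (auto simp: torus_skeleton_def continuous_map_in_subtopology)
  then have "homeomorphic_map (SPbar n k) (torus_skeleton n k) (SPbar_prod n k)"
    using compact_space_SPbar Hausdorff_space_torus_skeleton image inj_on_SPbar_prod
    by (rule continuous_imp_homeomorphic_map)
  then show ?thesis
    by (rule homeomorphic_map_imp_homeomorphic_space)
qed

end
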